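(* Let $r\ge 4$, $s\in\{2,\dots,r-1\}$, and let $A$ be an $s$-partition of $r$. Then the spectrum (with multiplicities) of the standard Laplacian of $\widehat K_r(A)$ consists of $$\frac{2r+1-\sqrt{4r+1}}{2r}\ \text{and}\ \frac{2r+1+\sqrt{4r+1}}{2r}\ \text{each with multiplicity } s-1,\qquad 1+\frac1r\ \text{with multiplicity } r-s+1,\qquad 0\ \text{with multiplicity }1,$$ and the spectrum of the signless standard Laplacian of $\widehat K_r(A)$ consists of $$\frac{2r-1-\sqrt{4r+1}}{2r}\ \text{and}\ \frac{2r-1+\sqrt{4r+1}}{2r}\ \text{each with multiplicity } s-1,\qquad 1-\frac1r\ \text{with multiplicity } r-s+1,\qquad 2\ \text{with multiplicity }1.$$ In particular these spectra depend only on $r$ and $s$.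
   Context: An $s$-partition of $r\in\mathbb N$ is a multiset $\{a_1,\dots,a_s\}$ of positive integers with $a_1+\dots+a_s=r$. $\widehat K_r$ is the graph obtained from the complete graph $K_r$ (vertices $w_1,\dots,w_r$) by attaching a pendant vertex $v_i$ to each $w_i$. For an $s$-partition $A$, $\widehat K_r(A)$ is obtained from $\widehat K_r$ by identifying the pendant vertices block-wise: $\{v_1,\dots,v_{a_1}\}$, $\{v_{a_1+1},\dots,v_{a_1+a_2}\}$, …, $\{v_{a_1+\dots+a_{s-1}+1},\dots,v_r\}$ each become one vertex, keeping all edges (so the $j$-th new vertex is adjacent to exactly the $a_j$ vertices $w_i$ of its block). The standard Laplacian is $(\Delta_G f)(v)=f(v)-\frac{1}{\deg v}\sum_{u\in N_v}f(u)$ and the signless one $(\Delta_{G^+}f)(v)=f(v)+\frac{1}{\deg v}\sum_{u\in N_v}f(u)$. *)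

theory Defs
  imports "Jordan_Normal_Form.Char_Poly"
begin

text \<open>Vertices of K_r-hat(A), for A given as a list a = [a_1,...,a_s]:
  0..r-1 are w_1..w_r; r+j (j < s) is the j-th identified pendant vertex,
  adjacent to the w_i with sum(take j a) <= i < sum(take (j+1) a).\<close>

definition nverts :: "nat \<Rightarrow> nat list \<Rightarrow> nat" where
  "nverts r a = r + length a"

definition adj :: "nat \<Rightarrow> nat list \<Rightarrow> nat \<Rightarrow> nat \<Rightarrow> bool" where
  "adj r a u v \<longleftrightarrow>
     (u < r \<and> v < r \<and> u \<noteq> v)
   \<or> (u < r \<and> r \<le> v \<and> v < r + length a \<and>
        sum_list (take (v - r) a) \<le> u \<and> u < sum_list (take (Suc (v - r)) a))
   \<or> (v < r \<and> r \<le> u \<and> u < r + length a \<and>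
        sum_list (take (u - r) a) \<le> v \<and> v < sum_list (take (Suc (u - r)) a))"

definition deg :: "nat \<Rightarrow> nat list \<Rightarrow> nat \<Rightarrow> nat" where
  "deg r a v = card {u. u < nverts r a \<and> adj r a v u}"

definition std_laplacian :: "nat \<Rightarrow> nat list \<Rightarrow> real mat" where
  "std_laplacian r a = mat (nverts r a) (nverts r a)
     (\<lambda>(v, u). (if v = u then 1 else 0) - (if adj r a v u then 1 / real (deg r a v) else 0))"

definition signless_laplacian :: "nat \<Rightarrow> nat list \<Rightarrow> real mat" where
  "signless_laplacian r a = mat (nverts r a) (nverts r a)
     (\<lambda>(v, u). (if v = u then 1 else 0) + (if adj r a v u then 1 / real (deg r a v) else 0))"

end

theory Submission
  imports Defs
begin

text \<open>Both Laplacians are \<open>1 - P\<close> and \<open>1 + P\<close> for the random-walk matrix \<open>P = D\<^sup>-\<^sup>1 A\<close>,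
  so everything follows from \<open>det (c \<cdot> 1 - P)\<close>. With the \<open>r\<close> clique vertices listed first,
  subtracting the sum of the pendant columns from every clique column turns the clique block into
  \<open>(c + 1/r) \<cdot> 1\<close>. The Schur complement on the \<open>s\<close> pendant vertices is then a scalar matrix
  minus a matrix with equal rows, whose determinant is elementary; this gives
  \<open>det (c \<cdot> 1 - P) = (c + 1/r)^(r-s+1) (c^2 + c/r - 1/r)^(s-1) (c - 1)\<close>. Substituting
  \<open>c = 1 - t\<close>, resp. \<open>c = t - 1\<close>, and splitting the quadratic gives the two spectra.\<close>

lemma det_unit_lower_triangular:
  fixes A :: "'a :: comm_ring_1 mat"
  assumes "A \<in> carrier_mat n n"
    and "\<And>i j. i < j \<Longrightarrow> j < n \<Longrightarrow> A $$ (i, j) = 0"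
    and "\<And>i. i < n \<Longrightarrow> A $$ (i, i) = 1"
  shows "det A = 1"
proof -
  have "diag_mat A = replicate n 1"
    using assms by (auto simp: diag_mat_def list_eq_iff_nth_eq)
  then show ?thesis using det_lower_triangular[OF assms(2,1)] by simp
qed

lemma mult_mat_add_columns_to_first:
  fixes M :: "'a :: comm_ring_1 mat"
  assumes "M \<in> carrier_mat s s"
  shows "M * mat s s (\<lambda>(i, j). if i = j \<or> j = 0 then 1 else 0)
       = mat s s (\<lambda>(k, j). if j = 0 then (\<Sum>i<s. M $$ (k, i)) else M $$ (k, j))"
proof (rule eq_matI)
  fix k j assume "k < dim_row (mat s s (\<lambda>(k, j). if j = 0 then (\<Sum>i<s. M $$ (k, i)) else M $$ (k, j)))"
    "j < dim_col (mat s s (\<lambda>(k, j). if j = 0 then (\<Sum>i<s. M $$ (k, i)) else M $$ (k, j)))"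
  then have k: "k < s" and j: "j < s" by auto
  have "(\<Sum>i<s. M $$ (k, i) * (if i = j \<or> j = 0 then 1 else 0))
      = (if j = 0 then (\<Sum>i<s. M $$ (k, i)) else M $$ (k, j))"
    using j by (cases "j = 0") (auto simp: if_distrib cong: if_cong)
  then show "(M * mat s s (\<lambda>(i, j). if i = j \<or> j = 0 then 1 else 0)) $$ (k, j)
      = mat s s (\<lambda>(k, j). if j = 0 then (\<Sum>i<s. M $$ (k, i)) else M $$ (k, j)) $$ (k, j)"
    using assms k j by (simp add: scalar_prod_def atLeast0LessThan)
qed (use assms in auto)

lemma mult_mat_subtract_first_row:
  fixes M :: "'a :: comm_ring_1 mat"
  assumes "M \<in> carrier_mat s s"
  shows "mat s s (\<lambda>(k, i). if k = i then 1 else if i = 0 then -1 else 0) * M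
       = mat s s (\<lambda>(k, j). if k = 0 then M $$ (0, j) else M $$ (k, j) - M $$ (0, j))"
proof (rule eq_matI)
  fix k j assume "k < dim_row (mat s s (\<lambda>(k, j). if k = 0 then M $$ (0, j) else M $$ (k, j) - M $$ (0, j)))"
    "j < dim_col (mat s s (\<lambda>(k, j). if k = 0 then M $$ (0, j) else M $$ (k, j) - M $$ (0, j)))"
  then have k: "k < s" and j: "j < s" by auto
  have "(\<Sum>i<s. (if k = i then 1 else if i = 0 then -1 else 0) * M $$ (i, j))
      = (\<Sum>i<s. (if i = k then M $$ (k, j) else 0) - (if i = 0 \<and> k \<noteq> 0 then M $$ (0, j) else 0))"
    by (rule sum.cong) auto
  also have "\<dots> = (if k = 0 then M $$ (0, j) else M $$ (k, j) - M $$ (0, j))"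
    using k by (simp add: sum_subtractf)
  finally show "(mat s s (\<lambda>(k, i). if k = i then 1 else if i = 0 then -1 else 0) * M) $$ (k, j)
      = mat s s (\<lambda>(k, j). if k = 0 then M $$ (0, j) else M $$ (k, j) - M $$ (0, j)) $$ (k, j)"
    using assms k j by (simp add: scalar_prod_def atLeast0LessThan)
qed (use assms in auto)

lemma det_scalar_minus_equal_rows:
  fixes \<beta> :: "'a :: comm_ring_1" and w :: "nat \<Rightarrow> 'a"
  assumes "s \<ge> 1"
  shows "det (mat s s (\<lambda>(j, l). (if j = l then \<beta> else 0) - w l))
       = \<beta> ^ (s - 1) * (\<beta> - (\<Sum>l<s. w l))"
proof -
  define M where "M = mat s s (\<lambda>(j, l). (if j = l then \<beta> else 0) - w l)"
  define X :: "'a mat" where "X = mat s s (\<lambda>(i, j). if i = j \<or> j = 0 then 1 else 0)"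
  define Y :: "'a mat" where "Y = mat s s (\<lambda>(k, i). if k = i then 1 else if i = 0 then -1 else 0)"
  define \<sigma> where "\<sigma> = \<beta> - (\<Sum>l<s. w l)"
  have carriers: "M \<in> carrier_mat s s" "X \<in> carrier_mat s s" "Y \<in> carrier_mat s s"
    by (auto simp: M_def X_def Y_def)
  \<comment> \<open>all row sums of \<open>M\<close> equal \<open>\<sigma>\<close>, so after these operations column 0 is \<open>\<sigma> e\<^sub>0\<close>\<close>
  have "(\<Sum>i<s. M $$ (k, i)) = \<sigma>" if "k < s" for k
    using that by (simp add: M_def \<sigma>_def sum_subtractf)
  then have MX: "M * X = mat s s (\<lambda>(k, j). if j = 0 then \<sigma> else M $$ (k, j))"
    unfolding X_def mult_mat_add_columns_to_first[OF carriers(1)] by (auto intro!: eq_matI)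
  have T: "Y * (M * X) = mat s s (\<lambda>(k, j).
      if j = 0 then (if k = 0 then \<sigma> else 0) else if k = j then \<beta> else if k = 0 then - w j else 0)"
    unfolding MX Y_def using assms
    by (subst mult_mat_subtract_first_row) (auto intro!: eq_matI simp: M_def)
  have "det X = 1" "det Y = 1"
    by (rule det_unit_lower_triangular[of _ s]; auto simp: X_def Y_def)+
  then have "det M = det (Y * (M * X))"
    using carriers by (simp add: det_mult[of _ s])
  also have "\<dots> = \<beta> ^ (s - 1) * \<sigma>"
  proof -
    have "diag_mat (Y * (M * X)) = \<sigma> # replicate (s - 1) \<beta>"
      using assms by (auto simp: T diag_mat_def list_eq_iff_nth_eq nth_Cons split: nat.splits)
    moreover have "det (Y * (M * X)) = prod_list (diag_mat (Y * (M * X)))"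
      unfolding T by (rule det_upper_triangular[of _ s]) (auto simp: upper_triangular_def)
    ultimately show ?thesis by (simp add: mult.commute)
  qed
  finally show ?thesis by (simp add: M_def \<sigma>_def)
qed

lemma det_four_block_mat_scalar_corner:
  fixes B C D :: "'a :: field mat"
  assumes "\<alpha> \<noteq> 0" and B: "B \<in> carrier_mat n m" and C: "C \<in> carrier_mat m n"
    and D: "D \<in> carrier_mat m m"
  shows "det (four_block_mat (\<alpha> \<cdot>\<^sub>m 1\<^sub>m n) B C D) = \<alpha> ^ n * det (D - (1 / \<alpha>) \<cdot>\<^sub>m (C * B))"
proof -
  define L where "L = four_block_mat (\<alpha> \<cdot>\<^sub>m 1\<^sub>m n) (0\<^sub>m n m) C (1\<^sub>m m)"
  define U where "U = four_block_mat (1\<^sub>m n) ((1 / \<alpha>) \<cdot>\<^sub>m B) (0\<^sub>m m n) (D - (1 / \<alpha>) \<cdot>\<^sub>m (C * B))"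
  have "(\<alpha> \<cdot>\<^sub>m 1\<^sub>m n) * ((1 / \<alpha>) \<cdot>\<^sub>m B) = B"
    using B \<open>\<alpha> \<noteq> 0\<close> by (intro eq_matI) auto
  moreover have "(1 / \<alpha>) \<cdot>\<^sub>m (C * B) + (D - (1 / \<alpha>) \<cdot>\<^sub>m (C * B)) = D"
    using B C D by (intro eq_matI) auto
  ultimately have "L * U = four_block_mat (\<alpha> \<cdot>\<^sub>m 1\<^sub>m n) B C D"
    unfolding L_def U_def using B C D
    by (subst mult_four_block_mat[of _ n n _ m _ m _ _ n _ m]) auto
  moreover have "det L = \<alpha> ^ n" unfolding L_def
    by (subst det_four_block_mat_upper_right_zero[OF _ refl C]) auto
  moreover have "det U = det (D - (1 / \<alpha>) \<cdot>\<^sub>m (C * B))" unfolding U_def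
    by (subst det_four_block_mat_lower_left_zero[of _ n _ m]) (use B C D in auto)
  moreover have "L \<in> carrier_mat (n + m) (n + m)" "U \<in> carrier_mat (n + m) (n + m)"
    using B C D by (auto simp: L_def U_def)
  ultimately show ?thesis by (metis det_mult)
qed

lemma poly_eq_except_point:
  fixes p q :: "'a :: {idom, ring_char_0} poly"
  assumes "\<And>t. t \<noteq> z \<Longrightarrow> poly p t = poly q t"
  shows "p = q"
proof (rule ccontr)
  assume "p \<noteq> q"
  then have "finite {t. poly (p - q) t = 0}" by (intro poly_roots_finite) simp
  moreover have "UNIV - {z} \<subseteq> {t. poly (p - q) t = 0}" using assms by auto
  ultimately have "finite (UNIV - {z} :: 'a set)" by (rule finite_subset[rotated])
  then show False by (simp add: infinite_UNIV_char_0)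
qed

lemma poly_char_poly_one_minus:
  fixes A :: "'a :: field mat"
  assumes "A \<in> carrier_mat n n"
  shows "poly (char_poly (1\<^sub>m n - A)) t = (-1) ^ n * poly (char_poly A) (1 - t)"
proof -
  have "- char_matrix (1\<^sub>m n - A) t = (-1) \<cdot>\<^sub>m (- char_matrix A (1 - t))"
    using assms by (intro eq_matI) (auto simp: char_matrix_def)
  moreover have "1\<^sub>m n - A \<in> carrier_mat n n" using assms by auto
  ultimately show ?thesis
    using assms by (simp add: char_poly_matrix[of _ n] char_matrix_def)
qed

lemma poly_char_poly_one_plus:
  fixes A :: "'a :: field mat"
  assumes "A \<in> carrier_mat n n"
  shows "poly (char_poly (1\<^sub>m n + A)) t = poly (char_poly A) (t - 1)"
proof -
  have "char_matrix (1\<^sub>m n + A) t = char_matrix A (t - 1)"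
    using assms by (intro eq_matI) (auto simp: char_matrix_def)
  moreover have "1\<^sub>m n + A \<in> carrier_mat n n" using assms by auto
  ultimately show ?thesis
    using assms by (simp add: char_poly_matrix[of _ n])
qed

lemma conjugate_roots_product:
  fixes R b t :: real
  assumes "R > 0"
  shows "(t - (b - sqrt (4 * R + 1)) / (2 * R)) * (t - (b + sqrt (4 * R + 1)) / (2 * R))
       = t ^ 2 - b / R * t + (b ^ 2 - (4 * R + 1)) / (4 * R ^ 2)"
proof -
  have "sqrt (4 * R + 1) ^ 2 = 4 * R + 1" using assms by simp
  then show ?thesis using assms by (simp add: field_simps power2_eq_square)
qed

definition block_start :: "nat list \<Rightarrow> nat \<Rightarrow> nat" where
  "block_start a j = sum_list (take j a)"

text \<open>Clique vertex \<open>i\<close> is adjacent to the pendant vertex \<open>r + block_of a i\<close>.\<close>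

definition block_of :: "nat list \<Rightarrow> nat \<Rightarrow> nat" where
  "block_of a i = (LEAST j. i < block_start a (Suc j))"

lemma block_start_Suc: "j < length a \<Longrightarrow> block_start a (Suc j) = block_start a j + a ! j"
  unfolding block_start_def by (simp add: take_Suc_conv_app_nth)

lemma block_start_mono: "j \<le> k \<Longrightarrow> block_start a j \<le> block_start a k"
  unfolding block_start_def by (metis take_add le_add_diff_inverse sum_list_append le_add1)

lemma block_start_length: "block_start a (length a) = sum_list a"
  unfolding block_start_def by simp

lemma block_of_bounds:
  assumes "i < sum_list a"
  shows "block_of a i < length a" "block_start a (block_of a i) \<le> i"
    "i < block_start a (Suc (block_of a i))"
proof -
  have "a \<noteq> []" using assms by auto
  then have ex: "i < block_start a (Suc (length a - 1))"
    using assms block_start_length[of a] by simp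
  show "i < block_start a (Suc (block_of a i))"
    unfolding block_of_def by (rule LeastI, rule ex)
  have "block_of a i \<le> length a - 1"
    unfolding block_of_def by (rule Least_le, rule ex)
  then show "block_of a i < length a" using \<open>a \<noteq> []\<close> by (cases a) auto
  show "block_start a (block_of a i) \<le> i"
  proof (cases "block_of a i")
    case (Suc m)
    have "\<not> i < block_start a (Suc m)"
      using Suc not_less_Least[of m "\<lambda>j. i < block_start a (Suc j)"] by (simp add: block_of_def)
    then show ?thesis using Suc by simp
  qed (simp add: block_start_def)
qed

lemma block_of_eq_iff:
  assumes "i < sum_list a" "j < length a"
  shows "block_of a i = j \<longleftrightarrow> block_start a j \<le> i \<and> i < block_start a (Suc j)"
proof
  assume "block_start a j \<le> i \<and> i < block_start a (Suc j)"
  moreover note block_of_bounds[OF assms(1)]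
  moreover have "block_start a (Suc k) \<le> block_start a l" if "k < l" for k l
    using that by (intro block_start_mono) simp
  ultimately show "block_of a i = j"
    by (metis linorder_neqE_nat not_le order.strict_trans1)
qed (use block_of_bounds[OF assms(1)] in auto)

lemma card_block:
  assumes "j < length a"
  shows "card {i. i < sum_list a \<and> block_of a i = j} = a ! j"
proof -
  have "block_start a (Suc j) \<le> sum_list a"
    using block_start_mono[of "Suc j" "length a" a] assms by (simp add: block_start_length)
  have "{i. i < sum_list a \<and> block_of a i = j} = {block_start a j ..< block_start a (Suc j)}"
  proof (rule equalityI[OF _ subsetI])
    fix x assume "x \<in> {block_start a j ..< block_start a (Suc j)}"
    with \<open>block_start a (Suc j) \<le> sum_list a\<close> have "x < sum_list a" by simp
    with block_of_eq_iff[OF this assms] \<open>x \<in> _\<close>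
    show "x \<in> {i. i < sum_list a \<and> block_of a i = j}" by simp
  qed (use block_of_bounds in auto)
  then show ?thesis using block_start_Suc[OF assms] by simp
qed

lemma sum_if_block_of:
  assumes "j < length a"
  shows "(\<Sum>i < sum_list a. if block_of a i = j then K else 0) = of_nat (a ! j) * (K :: 'a :: semiring_1)"
proof -
  have "(\<Sum>i < sum_list a. if block_of a i = j then K else 0)
      = (\<Sum>i \<in> {i. i < sum_list a \<and> block_of a i = j}. K)"
    by (simp add: sum.If_cases Collect_conj_eq lessThan_def Int_commute)
  then show ?thesis using card_block[OF assms] by simp
qed

lemma length_le_sum_list: "\<forall>x\<in>set a. x > 0 \<Longrightarrow> length a \<le> sum_list (a :: nat list)"
  by (induction a) auto

lemma adj_clique_clique: "u < r \<Longrightarrow> v < r \<Longrightarrow> adj r a u v \<longleftrightarrow> u \<noteq> v"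
  unfolding adj_def by auto

lemma not_adj_pendant_pendant: "\<not> adj r a (r + j) (r + l)"
  unfolding adj_def by auto

context
  fixes r :: nat and a :: "nat list"
  assumes sum_a: "sum_list a = r"
begin

lemma adj_clique_pendant:
  "u < r \<Longrightarrow> j < length a \<Longrightarrow> adj r a u (r + j) \<longleftrightarrow> block_of a u = j"
  unfolding adj_def using block_of_eq_iff[of u a j] sum_a by (auto simp: block_start_def)

lemma adj_pendant_clique:
  "u < r \<Longrightarrow> j < length a \<Longrightarrow> adj r a (r + j) u \<longleftrightarrow> block_of a u = j"
  unfolding adj_def using block_of_eq_iff[of u a j] sum_a by (auto simp: block_start_def)

lemma deg_clique:
  assumes "u < r"
  shows "deg r a u = r"
proof -
  have b: "block_of a u < length a" using block_of_bounds(1)[of u a] assms sum_a by simp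
  have "{v. v < nverts r a \<and> adj r a u v} = ({..<r} - {u}) \<union> {r + block_of a u}"
  proof (rule equalityI; rule subsetI)
    fix v assume v: "v \<in> {v. v < nverts r a \<and> adj r a u v}"
    show "v \<in> ({..<r} - {u}) \<union> {r + block_of a u}"
    proof (cases "v < r")
      case True then show ?thesis using v adj_clique_clique[OF assms] by auto
    next
      case False
      then obtain j where j: "v = r + j" by (metis le_add_diff_inverse not_less)
      with v have "j < length a" by (simp add: nverts_def)
      with v j adj_clique_pendant[OF assms this] show ?thesis by auto
    qed
  qed (use adj_clique_clique[OF assms] adj_clique_pendant[OF assms b] b in \<open>auto simp: nverts_def\<close>)
  then show ?thesis unfolding deg_def using assms by (simp add: card_Diff_subset)
qed

lemma deg_pendant:
  assumes "j < length a"
  shows "deg r a (r + j) = a ! j"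
proof -
  have "{v. v < nverts r a \<and> adj r a (r + j) v} = {i. i < r \<and> block_of a i = j}"
  proof (rule equalityI; rule subsetI)
    fix v assume v: "v \<in> {v. v < nverts r a \<and> adj r a (r + j) v}"
    then have "v < r" using not_adj_pendant_pendant
      by (metis le_add_diff_inverse mem_Collect_eq not_less)
    with v show "v \<in> {i. i < r \<and> block_of a i = j}" using adj_pendant_clique[OF _ assms] by auto
  qed (use adj_pendant_clique[OF _ assms] in \<open>auto simp: nverts_def\<close>)
  then show ?thesis unfolding deg_def using card_block[OF assms] sum_a by simp
qed

end

definition transition_mat :: "nat \<Rightarrow> nat list \<Rightarrow> real mat" where
  "transition_mat r a = mat (nverts r a) (nverts r a)
     (\<lambda>(v, u). if adj r a v u then 1 / real (deg r a v) else 0)"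

lemma transition_mat_carrier: "transition_mat r a \<in> carrier_mat (nverts r a) (nverts r a)"
  unfolding transition_mat_def by simp

lemma std_laplacian_eq: "std_laplacian r a = 1\<^sub>m (nverts r a) - transition_mat r a"
  unfolding std_laplacian_def transition_mat_def by (rule eq_matI) auto

lemma signless_laplacian_eq: "signless_laplacian r a = 1\<^sub>m (nverts r a) + transition_mat r a"
  unfolding signless_laplacian_def transition_mat_def by (rule eq_matI) auto

definition clique_to_pendant :: "nat \<Rightarrow> nat list \<Rightarrow> real mat" where
  "clique_to_pendant r a = mat r (length a) (\<lambda>(i, j). if block_of a i = j then 1 / real r else 0)"

definition pendant_to_clique :: "nat \<Rightarrow> nat list \<Rightarrow> real mat" where
  "pendant_to_clique r a = mat (length a) r (\<lambda>(j, i). if block_of a i = j then 1 / real (a ! j) else 0)"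

lemma shifted_transition_mat_blocks:
  assumes "sum_list a = r"
  shows "c \<cdot>\<^sub>m 1\<^sub>m (nverts r a) - transition_mat r a = four_block_mat
     (mat r r (\<lambda>(i, k). if i = k then c else - 1 / real r))
     (- clique_to_pendant r a) (- pendant_to_clique r a) (c \<cdot>\<^sub>m 1\<^sub>m (length a))" (is "_ = ?B")
proof (rule eq_matI)
  fix v u assume "v < dim_row ?B" "u < dim_col ?B"
  then have v: "v < r + length a" and u: "u < r + length a"
    by (auto simp: clique_to_pendant_def pendant_to_clique_def)
  note simps = transition_mat_def nverts_def clique_to_pendant_def pendant_to_clique_def
    adj_clique_clique adj_clique_pendant[OF assms] adj_pendant_clique[OF assms]
    not_adj_pendant_pendant deg_clique[OF assms] deg_pendant[OF assms]
  have clique_or_pendant: "x < r \<or> (\<exists>j < length a. x = r + j)" if "x < r + length a" for x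
    using that by (metis add_diff_inverse_nat add_less_cancel_left)
  show "(c \<cdot>\<^sub>m 1\<^sub>m (nverts r a) - transition_mat r a) $$ (v, u) = ?B $$ (v, u)"
    using clique_or_pendant[OF v] clique_or_pendant[OF u] by (auto simp: simps)
qed (auto simp: transition_mat_def nverts_def clique_to_pendant_def pendant_to_clique_def)

lemma det_shifted_transition_mat_schur:
  assumes sum_a: "sum_list a = r" and \<alpha>: "c + 1 / real r \<noteq> 0"
  shows "det (c \<cdot>\<^sub>m 1\<^sub>m (nverts r a) - transition_mat r a) = (c + 1 / real r) ^ r
     * det (c \<cdot>\<^sub>m 1\<^sub>m (length a) - (1 / (c + 1 / real r)) \<cdot>\<^sub>m
         ((pendant_to_clique r a + c \<cdot>\<^sub>m mat (length a) r (\<lambda>_. 1)) * clique_to_pendant r a))"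
proof -
  define s where "s = length a"
  define A where "A = mat r r (\<lambda>(i, k). if i = k then c else - 1 / real r)"
  define E :: "real mat" where "E = mat s r (\<lambda>_. 1)"
  define X where "X = four_block_mat (1\<^sub>m r) (0\<^sub>m r s) (- E) (1\<^sub>m s)"
  note N = shifted_transition_mat_blocks[OF sum_a, of c, folded A_def s_def]
  have carriers: "A \<in> carrier_mat r r" "clique_to_pendant r a \<in> carrier_mat r s"
    "pendant_to_clique r a \<in> carrier_mat s r" "E \<in> carrier_mat s r"
    by (auto simp: A_def E_def s_def clique_to_pendant_def pendant_to_clique_def)
  \<comment> \<open>each row of \<open>clique_to_pendant\<close> has exactly one entry \<open>1/r\<close>\<close>
  have "A + clique_to_pendant r a * E = (c + 1 / real r) \<cdot>\<^sub>m 1\<^sub>m r"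
  proof (rule eq_matI)
    fix i k assume "i < dim_row ((c + 1 / real r) \<cdot>\<^sub>m 1\<^sub>m r)" "k < dim_col ((c + 1 / real r) \<cdot>\<^sub>m 1\<^sub>m r)"
    then have i: "i < r" and k: "k < r" by auto
    have "block_of a i < s" using block_of_bounds(1)[of i a] i sum_a by (simp add: s_def)
    then have "(clique_to_pendant r a * E) $$ (i, k) = 1 / real r"
      using i k by (simp add: clique_to_pendant_def E_def s_def scalar_prod_def atLeast0LessThan)
    then show "(A + clique_to_pendant r a * E) $$ (i, k) = ((c + 1 / real r) \<cdot>\<^sub>m 1\<^sub>m r) $$ (i, k)"
      using i k carriers by (auto simp: A_def)
  qed (use carriers in auto)
  moreover have "(c \<cdot>\<^sub>m 1\<^sub>m s) * E = c \<cdot>\<^sub>m E"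
    using carriers by (simp add: mult_smult_assoc_mat[of _ s s])
  ultimately have NX: "(c \<cdot>\<^sub>m 1\<^sub>m (nverts r a) - transition_mat r a) * X = four_block_mat
      ((c + 1 / real r) \<cdot>\<^sub>m 1\<^sub>m r) (- clique_to_pendant r a)
      (- (pendant_to_clique r a + c \<cdot>\<^sub>m E)) (c \<cdot>\<^sub>m 1\<^sub>m s)"
    unfolding N X_def using carriers
    by (subst mult_four_block_mat[of _ r r _ s _ s _ _ r _ s]) auto
  have "det X = 1" unfolding X_def
    by (subst det_four_block_mat_upper_right_zero[of _ r _ s]) (use carriers in auto)
  moreover have "c \<cdot>\<^sub>m 1\<^sub>m (nverts r a) - transition_mat r a \<in> carrier_mat (r + s) (r + s)"
    "X \<in> carrier_mat (r + s) (r + s)"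
    using carriers by (auto simp: N X_def)
  ultimately have "det (c \<cdot>\<^sub>m 1\<^sub>m (nverts r a) - transition_mat r a)
      = det ((c \<cdot>\<^sub>m 1\<^sub>m (nverts r a) - transition_mat r a) * X)"
    by (simp add: det_mult)
  also have "\<dots> = (c + 1 / real r) ^ r * det (c \<cdot>\<^sub>m 1\<^sub>m s - (1 / (c + 1 / real r)) \<cdot>\<^sub>m
      ((pendant_to_clique r a + c \<cdot>\<^sub>m E) * clique_to_pendant r a))"
    unfolding NX using \<alpha> carriers by (subst det_four_block_mat_scalar_corner) auto
  finally show ?thesis by (simp add: s_def E_def)
qed

lemma pendant_clique_pendant_product:
  assumes pos: "\<forall>x\<in>set a. x > 0" and sum_a: "sum_list a = r"
  shows "(pendant_to_clique r a + c \<cdot>\<^sub>m mat (length a) r (\<lambda>_. 1)) * clique_to_pendant r a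
       = mat (length a) (length a) (\<lambda>(j, l). (if j = l then 1 / real r else 0) + c * real (a ! l) / real r)"
    (is "_ = ?M")
proof (rule eq_matI)
  fix j l assume "j < dim_row ?M" "l < dim_col ?M"
  then have j: "j < length a" and l: "l < length a" by auto
  have "((pendant_to_clique r a + c \<cdot>\<^sub>m mat (length a) r (\<lambda>_. 1)) * clique_to_pendant r a) $$ (j, l)
      = (\<Sum>i < sum_list a. if block_of a i = l then
          c / real r + (if l = j then 1 / (real r * real (a ! j)) else 0) else 0)"
    using j l sum_a by (auto simp: pendant_to_clique_def clique_to_pendant_def scalar_prod_def
        atLeast0LessThan algebra_simps intro!: sum.cong)
  also have "\<dots> = ?M $$ (j, l)"
    using j l pos by (subst sum_if_block_of) (auto simp: field_simps)
  finally show "((pendant_to_clique r a + c \<cdot>\<^sub>m mat (length a) r (\<lambda>_. 1)) * clique_to_pendant r a) $$ (j, l)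
      = ?M $$ (j, l)" .
qed (auto simp: pendant_to_clique_def clique_to_pendant_def)

lemma det_shifted_transition_mat:
  assumes pos: "\<forall>x\<in>set a. x > 0" and sum_a: "sum_list a = r" and "a \<noteq> []"
    and \<alpha>_nz: "c + 1 / real r \<noteq> 0"
  shows "det (c \<cdot>\<^sub>m 1\<^sub>m (nverts r a) - transition_mat r a)
       = (c + 1 / real r) ^ (r - length a + 1) * (c\<^sup>2 + c / real r - 1 / real r) ^ (length a - 1)
         * (c - 1)"
proof -
  define s where "s = length a"
  define \<alpha> where "\<alpha> = c + 1 / real r"
  define \<beta> where "\<beta> = c - 1 / (real r * \<alpha>)"
  define \<gamma> where "\<gamma> = c / (real r * \<alpha>)"
  have s: "1 \<le> s" "s \<le> r"
    using \<open>a \<noteq> []\<close> length_le_sum_list[OF pos] sum_a by (auto simp: s_def Suc_le_eq)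
  have r: "real r > 0" using s by simp
  have \<alpha>_nonzero: "\<alpha> \<noteq> 0" using \<alpha>_nz by (simp add: \<alpha>_def)
  have "c \<cdot>\<^sub>m 1\<^sub>m s - (1 / \<alpha>) \<cdot>\<^sub>m
      mat s s (\<lambda>(j, l). (if j = l then 1 / real r else 0) + c * real (a ! l) / real r)
      = mat s s (\<lambda>(j, l). (if j = l then \<beta> else 0) - \<gamma> * real (a ! l))"
    using \<alpha>_nonzero r by (intro eq_matI) (auto simp: \<beta>_def \<gamma>_def field_simps)
  moreover have "(\<Sum>l<s. real (a ! l)) = real r"
    using sum_a by (simp add: s_def sum_list_sum_nth atLeast0LessThan flip: of_nat_sum)
  ultimately have det: "det (c \<cdot>\<^sub>m 1\<^sub>m (nverts r a) - transition_mat r a)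
      = \<alpha> ^ r * (\<beta> ^ (s - 1) * (\<beta> - \<gamma> * real r))"
    using det_shifted_transition_mat_schur[OF sum_a \<alpha>_nz] pendant_clique_pendant_product[OF pos sum_a]
      det_scalar_minus_equal_rows[OF s(1), of \<beta> "\<lambda>l. \<gamma> * real (a ! l)"]
    by (simp add: \<alpha>_def [symmetric] s_def [symmetric] sum_distrib_left [symmetric])
  have "\<alpha> * \<beta> = \<alpha> * c - 1 / real r"
    using \<alpha>_nonzero by (simp add: \<beta>_def right_diff_distrib)
  then have quadratic: "\<alpha> * \<beta> = c\<^sup>2 + c / real r - 1 / real r"
    by (simp add: \<alpha>_def algebra_simps power2_eq_square)
  have "\<alpha> * (\<beta> - \<gamma> * real r) = \<alpha> * \<beta> - c"
    using \<alpha>_nonzero r by (simp add: \<gamma>_def right_diff_distrib)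
  also have "\<dots> = (c - 1) * \<alpha>"
    unfolding quadratic by (simp add: \<alpha>_def algebra_simps power2_eq_square diff_divide_distrib)
  finally have linear: "\<alpha> * (\<beta> - \<gamma> * real r) = (c - 1) * \<alpha>" .
  have "(r - s) + (s - 1) + 1 = r" using s by simp
  then have "\<alpha> ^ r = \<alpha> ^ (r - s) * \<alpha> ^ (s - 1) * \<alpha>"
    using power_add[of \<alpha> "(r - s) + (s - 1)" 1] power_add[of \<alpha> "r - s" "s - 1"] by simp
  then have "\<alpha> ^ r * (\<beta> ^ (s - 1) * (\<beta> - \<gamma> * real r))
      = \<alpha> ^ (r - s) * (\<alpha> * \<beta>) ^ (s - 1) * (\<alpha> * (\<beta> - \<gamma> * real r))"
    by (simp only: power_mult_distrib mult_ac)
  also have "\<dots> = \<alpha> ^ (r - s + 1) * (c\<^sup>2 + c / real r - 1 / real r) ^ (s - 1) * (c - 1)"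
    unfolding quadratic linear by (simp add: mult_ac)
  finally show ?thesis unfolding det by (simp add: \<alpha>_def s_def)
qed

lemma poly_char_poly_transition_mat:
  assumes "\<forall>x\<in>set a. x > 0" and "sum_list a = r" and "a \<noteq> []"
  shows "poly (char_poly (transition_mat r a)) c
       = (c + 1 / real r) ^ (r - length a + 1) * (c\<^sup>2 + c / real r - 1 / real r) ^ (length a - 1)
         * (c - 1)" (is "_ = ?f c")
proof -
  define p where "p = [:1 / real r, 1:] ^ (r - length a + 1)
      * [:- 1 / real r, 1 / real r, 1:] ^ (length a - 1) * [:- 1, 1:]"
  have poly_p: "poly p c = ?f c" for c
  proof -
    have "poly [:1 / real r, 1:] c = c + 1 / real r" "poly [:- 1, 1:] c = c - 1"
      "poly [:- 1 / real r, 1 / real r, 1:] c = c\<^sup>2 + c / real r - 1 / real r"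
      by (simp_all add: algebra_simps power2_eq_square)
    then show ?thesis unfolding p_def by (simp only: poly_mult poly_power)
  qed
  \<comment> \<open>the determinant formula misses only \<open>c = -1/r\<close>, which a polynomial identity does not see\<close>
  have "char_poly (transition_mat r a) = p"
  proof (rule poly_eq_except_point)
    fix c assume "c \<noteq> - 1 / real r"
    then have "c + 1 / real r \<noteq> 0" by (simp add: add_eq_0_iff)
    have "- char_matrix (transition_mat r a) c = c \<cdot>\<^sub>m 1\<^sub>m (nverts r a) - transition_mat r a"
      by (intro eq_matI) (auto simp: char_matrix_def transition_mat_def)
    then have "poly (char_poly (transition_mat r a)) c
        = det (c \<cdot>\<^sub>m 1\<^sub>m (nverts r a) - transition_mat r a)"
      using char_poly_matrix[OF transition_mat_carrier] by simp
    then show "poly (char_poly (transition_mat r a)) c = poly p c"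
      unfolding poly_p det_shifted_transition_mat[OF assms \<open>c + 1 / real r \<noteq> 0\<close>] .
  qed
  then show ?thesis using poly_p by simp
qed

lemma poly_linear_factor:
  fixes x t :: real
  shows "poly [:- x, 1:] t = t - x" "poly [:0, 1:] t = t"
  by simp_all

lemma char_poly_std_laplacian:
  assumes "\<forall>x\<in>set a. x > 0" and "sum_list a = r" and "a \<noteq> []"
  shows "char_poly (std_laplacian r a) =
           [:- ((2 * real r + 1 - sqrt (4 * real r + 1)) / (2 * real r)), 1:] ^ (length a - 1)
         * [:- ((2 * real r + 1 + sqrt (4 * real r + 1)) / (2 * real r)), 1:] ^ (length a - 1)
         * [:- (1 + 1 / real r), 1:] ^ (r - length a + 1)
         * [:0, 1:]"
proof (intro poly_eq_poly_eq_iff[THEN iffD1] ext)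
  fix t :: real
  define s where "s = length a"
  have s: "s \<le> r" "r > 0"
    using length_le_sum_list[OF assms(1)] assms(2,3) by (auto simp: s_def intro: less_le_trans[of 0 "length a"])
  have "poly (char_poly (std_laplacian r a)) t = (-1) ^ (r + s) * poly (char_poly (transition_mat r a)) (1 - t)"
    unfolding std_laplacian_eq using poly_char_poly_one_minus[OF transition_mat_carrier]
    by (simp add: nverts_def s_def)
  also have "\<dots> = (-1) ^ (r + s) * ((- (t - (1 + 1 / real r))) ^ (r - s + 1)
      * (t\<^sup>2 - (2 * real r + 1) / real r * t + 1) ^ (s - 1) * (- t))"
  proof -
    have "(1 - t)\<^sup>2 + (1 - t) / real r - 1 / real r = t\<^sup>2 - (2 * real r + 1) / real r * t + 1"
      using s by (simp add: field_simps power2_eq_square)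
    moreover have "1 - t + 1 / real r = - (t - (1 + 1 / real r))" "1 - t - 1 = - t" by simp_all
    ultimately show ?thesis
      by (simp only: poly_char_poly_transition_mat[OF assms] s_def[symmetric])
  qed
  also have "\<dots> = (t - (1 + 1 / real r)) ^ (r - s + 1)
      * (t\<^sup>2 - (2 * real r + 1) / real r * t + 1) ^ (s - 1) * t"
  proof -
    have "(r + s) + (r - s + 1) = 2 * r + 1" using s by simp
    then have "(-1::real) ^ (r + s) * (-1) ^ (r - s + 1) = - 1" by (simp flip: power_add)
    then have "(-1) ^ (r + s) * ((- x) ^ (r - s + 1) * y * (- z)) = x ^ (r - s + 1) * y * z"
      for x y z :: real
      by (simp add: power_minus[of x] mult.assoc[symmetric])
    then show ?thesis .
  qed
  also have "t\<^sup>2 - (2 * real r + 1) / real r * t + 1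
      = (t - (2 * real r + 1 - sqrt (4 * real r + 1)) / (2 * real r))
      * (t - (2 * real r + 1 + sqrt (4 * real r + 1)) / (2 * real r))"
    using s conjugate_roots_product[of "real r" "2 * real r + 1" t] by (simp add: field_simps power2_eq_square)
  finally show "poly (char_poly (std_laplacian r a)) t = poly (
           [:- ((2 * real r + 1 - sqrt (4 * real r + 1)) / (2 * real r)), 1:] ^ (length a - 1)
         * [:- ((2 * real r + 1 + sqrt (4 * real r + 1)) / (2 * real r)), 1:] ^ (length a - 1)
         * [:- (1 + 1 / real r), 1:] ^ (r - length a + 1)
         * [:0, 1:]) t"
    by (simp only: s_def poly_mult poly_power poly_linear_factor power_mult_distrib mult_ac)
qed

lemma char_poly_signless_laplacian:
  assumes "\<forall>x\<in>set a. x > 0" and "sum_list a = r" and "a \<noteq> []"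
  shows "char_poly (signless_laplacian r a) =
           [:- ((2 * real r - 1 - sqrt (4 * real r + 1)) / (2 * real r)), 1:] ^ (length a - 1)
         * [:- ((2 * real r - 1 + sqrt (4 * real r + 1)) / (2 * real r)), 1:] ^ (length a - 1)
         * [:- (1 - 1 / real r), 1:] ^ (r - length a + 1)
         * [:- 2, 1:]"
proof (intro poly_eq_poly_eq_iff[THEN iffD1] ext)
  fix t :: real
  have r: "r > 0"
    using length_le_sum_list[OF assms(1)] assms(2,3) by (auto intro: less_le_trans[of 0 "length a"])
  have "poly (char_poly (signless_laplacian r a)) t = poly (char_poly (transition_mat r a)) (t - 1)"
    unfolding signless_laplacian_eq by (rule poly_char_poly_one_plus[OF transition_mat_carrier])
  also have "\<dots> = (t - (1 - 1 / real r)) ^ (r - length a + 1)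
      * (t\<^sup>2 - (2 * real r - 1) / real r * t + (1 - 2 / real r)) ^ (length a - 1) * (t - 2)"
  proof -
    have "(t - 1)\<^sup>2 + (t - 1) / real r - 1 / real r = t\<^sup>2 - (2 * real r - 1) / real r * t + (1 - 2 / real r)"
      using r by (simp add: field_simps power2_eq_square)
    moreover have "t - 1 + 1 / real r = t - (1 - 1 / real r)" "t - 1 - 1 = t - 2" by simp_all
    ultimately show ?thesis
      by (simp only: poly_char_poly_transition_mat[OF assms])
  qed
  also have "t\<^sup>2 - (2 * real r - 1) / real r * t + (1 - 2 / real r)
      = (t - (2 * real r - 1 - sqrt (4 * real r + 1)) / (2 * real r))
      * (t - (2 * real r - 1 + sqrt (4 * real r + 1)) / (2 * real r))"
    using r conjugate_roots_product[of "real r" "2 * real r - 1" t] by (simp add: field_simps power2_eq_square)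
  finally show "poly (char_poly (signless_laplacian r a)) t = poly (
           [:- ((2 * real r - 1 - sqrt (4 * real r + 1)) / (2 * real r)), 1:] ^ (length a - 1)
         * [:- ((2 * real r - 1 + sqrt (4 * real r + 1)) / (2 * real r)), 1:] ^ (length a - 1)
         * [:- (1 - 1 / real r), 1:] ^ (r - length a + 1)
         * [:- 2, 1:]) t"
    by (simp only: poly_mult poly_power poly_linear_factor power_mult_distrib mult_ac)
qed

theorem mainTheorem6:
  fixes r s :: nat and a :: "nat list"
  assumes "r \<ge> 4" and "2 \<le> s" and "s \<le> r - 1"
    and "length a = s" and "\<forall>x\<in>set a. x > 0" and "sum_list a = r"
  shows "char_poly (std_laplacian r a) =
           [:- ((2 * real r + 1 - sqrt (4 * real r + 1)) / (2 * real r)), 1:] ^ (s - 1)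
         * [:- ((2 * real r + 1 + sqrt (4 * real r + 1)) / (2 * real r)), 1:] ^ (s - 1)
         * [:- (1 + 1 / real r), 1:] ^ (r - s + 1)
         * [:0, 1:] \<and>
         char_poly (signless_laplacian r a) =
           [:- ((2 * real r - 1 - sqrt (4 * real r + 1)) / (2 * real r)), 1:] ^ (s - 1)
         * [:- ((2 * real r - 1 + sqrt (4 * real r + 1)) / (2 * real r)), 1:] ^ (s - 1)
         * [:- (1 - 1 / real r), 1:] ^ (r - s + 1)
         * [:- 2, 1:]"
proof -
  have "a \<noteq> []" using assms(2,4) by auto
  then show ?thesis
    using char_poly_std_laplacian[OF assms(5,6)] char_poly_signless_laplacian[OF assms(5,6)] assms(4)
    by simp
qed

end
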